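(* Let $\alpha \in (0,1)$ and $x \in I_\alpha$. Then $x \in \mathbb Q$ if and only if there is an integer $N \ge 0$ such that $T_\alpha^N(x) = 1$.
   Context: For $\alpha \in (0,1)$ let $D_\alpha = \bigcup_{n \ge 1} \big[ \frac{1}{n+\alpha}, \frac1n \big]$, $D_\alpha^{\mathsf c} = [0,1]\setminus D_\alpha$, $I_\alpha = [\min\{\alpha,1-\alpha\},1]$, and $T_\alpha : I_\alpha \to I_\alpha$, $T_\alpha(x) = \frac1x - \lfloor \frac1x \rfloor$ if $x \in D_\alpha^{\mathsf c}$, $T_\alpha(x) = 1 + \lfloor \frac1x \rfloor - \frac1x$ if $x \in D_\alpha$. *)

theory Defs
  imports Complex_Main
begin

definition D_alpha :: "real \<Rightarrow> real set" where
  "D_alpha \<alpha> = (\<Union>n\<in>{1::nat..}. {1 / (real n + \<alpha>) .. 1 / real n})"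

definition I_alpha :: "real \<Rightarrow> real set" where
  "I_alpha \<alpha> = {min \<alpha> (1 - \<alpha>) .. 1}"

definition T_alpha :: "real \<Rightarrow> real \<Rightarrow> real" where
  "T_alpha \<alpha> x = (if x \<in> D_alpha \<alpha> then 1 + real_of_int \<lfloor>1 / x\<rfloor> - 1 / x
                    else 1 / x - real_of_int \<lfloor>1 / x\<rfloor>)"

end

theory Submission
  imports Defs
begin

text \<open>Both branches of \<open>T_alpha\<close> have the form \<open>\<plusminus>1/x + k\<close> with \<open>k\<close> an integer. Hence
  \<open>T_alpha\<close> maps rationals to rationals and back, and it sends \<open>a/q\<close> to a fraction with
  denominator \<open>a\<close>. On \<open>(0, 1]\<close> the map stays in \<open>(0, 1]\<close>: the only candidate value \<open>0\<close>
  would arise when \<open>1/x\<close> is an integer, but then \<open>x \<in> D_alpha\<close> and \<open>T_alpha x = 1\<close>.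
  So the denominator of a rational point \<open>a/q\<close> of \<open>(0, 1]\<close> drops from \<open>q\<close> to \<open>a\<close> along
  the orbit, strictly unless the point is \<open>1\<close>.\<close>

lemma inverse_nat_in_D_alpha:
  assumes "0 \<le> \<alpha>" and "1 \<le> n"
  shows "1 / real n \<in> D_alpha \<alpha>"
  unfolding D_alpha_def
proof (rule UN_I)
  show "n \<in> {1..}" using assms(2) by simp
  have "1 / (real n + \<alpha>) \<le> 1 / real n"
    using assms by (intro divide_left_mono) auto
  then show "1 / real n \<in> {1 / (real n + \<alpha>) .. 1 / real n}" by simp
qed

lemma T_alpha_eq_int_plus_minus_inverse:
  obtains k :: int where "T_alpha \<alpha> x = 1 / x - k \<or> T_alpha \<alpha> x = k - 1 / x"
proof (cases "x \<in> D_alpha \<alpha>")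
  case True
  then have "T_alpha \<alpha> x = (1 + \<lfloor>1 / x\<rfloor>) - 1 / x" by (simp add: T_alpha_def)
  then show ?thesis using that by (metis of_int_1 of_int_add)
next
  case False
  then have "T_alpha \<alpha> x = 1 / x - \<lfloor>1 / x\<rfloor>" by (simp add: T_alpha_def)
  then show ?thesis using that by blast
qed

lemma T_alpha_in_unit_interval:
  assumes "0 \<le> \<alpha>" and "0 < x" and "x \<le> 1"
  shows "0 < T_alpha \<alpha> x" and "T_alpha \<alpha> x \<le> 1"
proof -
  have floor_le: "\<lfloor>1 / x\<rfloor> \<le> 1 / x" and less_floor: "1 / x < \<lfloor>1 / x\<rfloor> + 1"
    by linarith+
  have "0 < T_alpha \<alpha> x \<and> T_alpha \<alpha> x \<le> 1"
  proof (cases "1 / x = \<lfloor>1 / x\<rfloor>")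
    case True
    have "1 \<le> 1 / x" using assms by simp
    then have n: "1 \<le> nat \<lfloor>1 / x\<rfloor>" by linarith
    with True have "real (nat \<lfloor>1 / x\<rfloor>) = 1 / x" by simp
    then have "x = 1 / real (nat \<lfloor>1 / x\<rfloor>)" by simp
    with inverse_nat_in_D_alpha[OF assms(1) n] have "x \<in> D_alpha \<alpha>" by simp
    then show ?thesis using True by (simp add: T_alpha_def)
  next
    case False
    then have "\<lfloor>1 / x\<rfloor> < 1 / x" using floor_le by linarith
    with less_floor show ?thesis unfolding T_alpha_def by (split if_split) linarith
  qed
  then show "0 < T_alpha \<alpha> x" and "T_alpha \<alpha> x \<le> 1" by auto
qed

lemma T_alpha_fraction_denominator:
  fixes a q :: int
  assumes "a \<noteq> 0"
  obtains b :: int where "T_alpha \<alpha> (a / q) = b / a"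
proof -
  obtain k :: int where k: "T_alpha \<alpha> (a / q) = q / a - k \<or> T_alpha \<alpha> (a / q) = k - q / a"
    using T_alpha_eq_int_plus_minus_inverse[of \<alpha> "a / q"] by auto
  have "q / a - k = of_int (q - k * a) / a" and "k - q / a = of_int (k * a - q) / a"
    using assms by (simp_all add: field_simps)
  with k that show ?thesis by metis
qed

lemma rational_in_unit_interval_reaches_one:
  fixes a q :: int
  assumes "0 \<le> \<alpha>" and "0 < a" and "a \<le> q"
  shows "\<exists>N. (T_alpha \<alpha> ^^ N) (a / q) = 1"
  using assms(2,3)
proof (induction "nat q" arbitrary: a q rule: less_induct)
  case less
  show ?case
  proof (cases "a = q")
    case True
    then have "(T_alpha \<alpha> ^^ 0) (a / q) = 1" using less.prems by simp
    then show ?thesis ..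
  next
    case False
    obtain b :: int where b: "T_alpha \<alpha> (a / q) = b / a"
      using T_alpha_fraction_denominator less.prems by (metis less_irrefl)
    have "0 < real_of_int a / q" and "real_of_int a / q \<le> 1"
      using less.prems by auto
    from T_alpha_in_unit_interval[OF assms(1) this] less.prems
    have "0 < b" and "b \<le> a" by (simp_all add: b zero_less_divide_iff divide_le_eq)
    moreover have "nat a < nat q" using False less.prems by linarith
    ultimately obtain N where "(T_alpha \<alpha> ^^ N) (b / a) = 1" using less.hyps by blast
    then have "(T_alpha \<alpha> ^^ Suc N) (a / q) = 1"
      by (simp add: b funpow_Suc_right del: funpow.simps)
    then show ?thesis ..
  qed
qed

lemma rational_if_T_alpha_rational:
  assumes "T_alpha \<alpha> x \<in> \<rat>"
  shows "x \<in> \<rat>"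
proof -
  obtain k :: int where "T_alpha \<alpha> x = 1 / x - k \<or> T_alpha \<alpha> x = k - 1 / x"
    using T_alpha_eq_int_plus_minus_inverse by blast
  then have "1 / x = T_alpha \<alpha> x + k \<or> 1 / x = k - T_alpha \<alpha> x" by linarith
  then have "1 / x \<in> \<rat>" using assms by (metis Rats_add Rats_diff Rats_of_int)
  then show ?thesis by (metis Rats_inverse inverse_eq_divide inverse_inverse_eq)
qed

lemma rational_if_funpow_T_alpha_rational:
  "(T_alpha \<alpha> ^^ N) x \<in> \<rat> \<Longrightarrow> x \<in> \<rat>"
proof (induction N arbitrary: x)
  case 0
  then show ?case by simp
next
  case (Suc N)
  then have "T_alpha \<alpha> x \<in> \<rat>" by (simp add: funpow_Suc_right del: funpow.simps)
  then show ?case by (rule rational_if_T_alpha_rational)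
qed

theorem proposition2p1:
  fixes \<alpha> x :: real
  assumes "0 < \<alpha>" and "\<alpha> < 1" and "x \<in> I_alpha \<alpha>"
  shows "x \<in> \<rat> \<longleftrightarrow> (\<exists>N::nat. (T_alpha \<alpha> ^^ N) x = 1)"
proof
  assume "x \<in> \<rat>"
  then obtain a q :: int where "0 < q" and x: "x = a / q"
    by (metis Rats_cases')
  have "0 < x" and "x \<le> 1" using assms unfolding I_alpha_def by auto
  with \<open>0 < q\<close> have "0 < a" and "a \<le> q"
    by (simp_all add: x zero_less_divide_iff divide_le_eq)
  then show "\<exists>N. (T_alpha \<alpha> ^^ N) x = 1"
    unfolding x using rational_in_unit_interval_reaches_one assms(1) by simp
next
  assume "\<exists>N. (T_alpha \<alpha> ^^ N) x = 1"
  then show "x \<in> \<rat>" using rational_if_funpow_T_alpha_rational by (metis Rats_1)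
qed

end
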